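(* Let $q$ be a prime power and let $M$ be a simple matroid representable over $GF(q)$ that has no coloops and has two distinct loose elements $e$ and $f$. Then $r(M)\le 2q$, or $\{e,f\}$ is a cocircuit of $M$.
   Context: All matroids are finite. An element $t$ of a matroid $M$ is loose if every circuit of $M$ containing $t$ has size at least the rank $r(M)$. *)

theory Defs
  imports "HOL-Analysis.Analysis" "HOL-Computational_Algebra.Primes"
begin

definition matroid :: "'a set \<Rightarrow> ('a set \<Rightarrow> bool) \<Rightarrow> bool" where
  "matroid E indep \<longleftrightarrow> finite E \<and> indep {} \<and>
     (\<forall>X. indep X \<longrightarrow> X \<subseteq> E) \<and>
     (\<forall>X Y. indep X \<longrightarrow> Y \<subseteq> X \<longrightarrow> indep Y) \<and>
     (\<forall>X Y. indep X \<longrightarrow> indep Y \<longrightarrow> card X < card Y \<longrightarrow>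
        (\<exists>y \<in> Y - X. indep (insert y X)))"

definition mrank :: "'a set \<Rightarrow> ('a set \<Rightarrow> bool) \<Rightarrow> nat" where
  "mrank E indep = Max {card X | X. X \<subseteq> E \<and> indep X}"

definition circuit :: "'a set \<Rightarrow> ('a set \<Rightarrow> bool) \<Rightarrow> 'a set \<Rightarrow> bool" where
  "circuit E indep C \<longleftrightarrow> C \<subseteq> E \<and> \<not> indep C \<and> (\<forall>D. D \<subset> C \<longrightarrow> indep D)"

definition basis :: "'a set \<Rightarrow> ('a set \<Rightarrow> bool) \<Rightarrow> 'a set \<Rightarrow> bool" where
  "basis E indep B \<longleftrightarrow> B \<subseteq> E \<and> indep B \<and> (\<forall>Y. B \<subset> Y \<longrightarrow> Y \<subseteq> E \<longrightarrow> \<not> indep Y)"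

definition cocircuit :: "'a set \<Rightarrow> ('a set \<Rightarrow> bool) \<Rightarrow> 'a set \<Rightarrow> bool" where
  "cocircuit E indep C \<longleftrightarrow> C \<subseteq> E \<and> (\<forall>B. basis E indep B \<longrightarrow> C \<inter> B \<noteq> {}) \<and>
     (\<forall>D. D \<subset> C \<longrightarrow> (\<exists>B. basis E indep B \<and> D \<inter> B = {}))"

definition coloop :: "'a set \<Rightarrow> ('a set \<Rightarrow> bool) \<Rightarrow> 'a \<Rightarrow> bool" where
  "coloop E indep e \<longleftrightarrow> e \<in> E \<and> (\<forall>B. basis E indep B \<longrightarrow> e \<in> B)"

text \<open>Simple: no loops and no parallel pairs, i.e. no circuits of size 1 or 2.\<close>
definition simple_matroid :: "'a set \<Rightarrow> ('a set \<Rightarrow> bool) \<Rightarrow> bool" where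
  "simple_matroid E indep \<longleftrightarrow> (\<forall>C. circuit E indep C \<longrightarrow> card C \<ge> 3)"

definition loose :: "'a set \<Rightarrow> ('a set \<Rightarrow> bool) \<Rightarrow> 'a \<Rightarrow> bool" where
  "loose E indep t \<longleftrightarrow> t \<in> E \<and>
     (\<forall>C. circuit E indep C \<longrightarrow> t \<in> C \<longrightarrow> card C \<ge> mrank E indep)"

definition represents :: "'a set \<Rightarrow> ('a set \<Rightarrow> bool) \<Rightarrow> ('a \<Rightarrow> 'f::field ^ 'n) \<Rightarrow> bool" where
  "represents E indep phi \<longleftrightarrow>
     (\<forall>X. X \<subseteq> E \<longrightarrow> (indep X \<longleftrightarrow> inj_on phi X \<and> \<not> vec.dependent (phi ` X)))"

end

theory Submission
  imports Defs
begin

(* Suppose r(M) > 2q and some basis B avoids e and f, and write e and f in coordinates with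
  respect to B. A circuit through a loose element has at least r elements, so each coordinate
  vector has at least r - 1 nonzero entries and the two supports share a set P of at least
  r - 2 > 2(q - 1) positions. On P the ratio of the coordinates of e and f takes only the q - 1
  nonzero values of the field, so some ratio l occurs on a set T of at least three positions.
  Then e - l f is supported off T, so e is spanned by f and B - T, at most r - 2 elements, which
  gives a circuit through e of size at most r - 1. Hence every basis meets {e, f}, and as neither
  e nor f is a coloop, {e, f} is a cocircuit. *)

lemma matroid_finite: "matroid E indep \<Longrightarrow> finite E"
  unfolding matroid_def by blast

lemma matroid_finite_subset: "matroid E indep \<Longrightarrow> X \<subseteq> E \<Longrightarrow> finite X"
  using matroid_finite finite_subset by blast

lemma matroid_indep_subset: "matroid E indep \<Longrightarrow> indep X \<Longrightarrow> Y \<subseteq> X \<Longrightarrow> indep Y"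
  unfolding matroid_def by blast

lemma basis_card_eq_mrank:
  assumes M: "matroid E indep" and B: "basis E indep B"
  shows "card B = mrank E indep"
proof -
  have le: "card X \<le> card B" if "X \<subseteq> E" "indep X" for X
  proof (rule ccontr)
    assume "\<not> card X \<le> card B"
    then obtain y where "y \<in> X - B" "indep (insert y B)"
      using M B \<open>indep X\<close> unfolding matroid_def basis_def by (meson not_le)
    then show False
      using B \<open>X \<subseteq> E\<close> unfolding basis_def by blast
  qed
  have "{card X | X. X \<subseteq> E \<and> indep X} \<subseteq> card ` Pow E"
    by blast
  then have "finite {card X | X. X \<subseteq> E \<and> indep X}"
    by (rule finite_subset) (simp add: matroid_finite[OF M])
  then have "Max {card X | X. X \<subseteq> E \<and> indep X} = card B"
    using B le unfolding basis_def by (intro Max_eqI) auto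
  then show ?thesis
    unfolding mrank_def by simp
qed

lemma dependent_contains_circuit:
  assumes M: "matroid E indep" and X: "X \<subseteq> E" "\<not> indep X"
  obtains C where "C \<subseteq> X" "circuit E indep C"
proof -
  let ?D = "{C. C \<subseteq> X \<and> \<not> indep C}"
  have "?D \<subseteq> Pow X"
    by blast
  then have "finite ?D"
    by (rule finite_subset) (simp add: matroid_finite_subset[OF M X(1)])
  moreover have "X \<in> ?D"
    using X by blast
  ultimately obtain C where C: "C \<subseteq> X" "\<not> indep C"
    and min: "\<And>D. D \<subseteq> X \<Longrightarrow> \<not> indep D \<Longrightarrow> D \<subseteq> C \<Longrightarrow> C = D"
    using finite_has_minimal2[of ?D X] by auto
  have "circuit E indep C"
    unfolding circuit_def
  proof (intro conjI allI impI)
    fix D assume "D \<subset> C"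
    then show "indep D"
      using min[of D] C(1) by blast
  qed (use C X(1) in auto)
  with C(1) show ?thesis
    by (rule that)
qed

lemma loose_mrank_le_card_dependent:
  assumes M: "matroid E indep" and L: "loose E indep e"
    and X: "X \<subseteq> E" "e \<in> X" "indep (X - {e})" "\<not> indep X"
  shows "mrank E indep \<le> card X"
proof -
  obtain C where C: "C \<subseteq> X" "circuit E indep C"
    using dependent_contains_circuit[OF M X(1,4)] .
  have "e \<in> C"
  proof (rule ccontr)
    assume "e \<notin> C"
    then have "indep C"
      using C(1) matroid_indep_subset[OF M X(3)] by blast
    with C(2) show False
      unfolding circuit_def by blast
  qed
  with C(2) L have "mrank E indep \<le> card C"
    unfolding loose_def by blast
  also have "\<dots> \<le> card X"
    using C(1) matroid_finite_subset[OF M X(1)] by (rule card_mono[rotated])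
  finally show ?thesis .
qed

lemma cocircuit_pair_if_meets_every_basis:
  assumes "e \<in> E" "f \<in> E" "\<not> coloop E indep e" "\<not> coloop E indep f"
    and "\<And>B. basis E indep B \<Longrightarrow> e \<in> B \<or> f \<in> B"
  shows "cocircuit E indep {e, f}"
  unfolding cocircuit_def
proof (intro conjI allI impI)
  fix D assume "D \<subset> {e, f}"
  then have "D \<subseteq> {e} \<or> D \<subseteq> {f}"
    by blast
  moreover obtain Be Bf where "basis E indep Be" "e \<notin> Be" "basis E indep Bf" "f \<notin> Bf"
    using assms(1-4) unfolding coloop_def by blast
  ultimately show "\<exists>B. basis E indep B \<and> D \<inter> B = {}"
    by blast
qed (use assms in auto)

lemma represents_indep_iff:
  fixes phi :: "'a \<Rightarrow> 'f::field ^ 'n"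
  assumes "represents E indep phi" "X \<subseteq> E"
  shows "indep X \<longleftrightarrow> inj_on phi X \<and> vec.independent (phi ` X)"
  using assms unfolding represents_def by blast

lemma represents_spanning_indep_subset:
  fixes phi :: "'a \<Rightarrow> 'f::field ^ 'n"
  assumes R: "represents E indep phi" and S: "S \<subseteq> E"
  obtains S0 where "S0 \<subseteq> S" "indep S0" "phi ` S \<subseteq> vec.span (phi ` S0)"
proof -
  obtain V where V: "V \<subseteq> phi ` S" "vec.independent V" "phi ` S \<subseteq> vec.span V"
    using vec.maximal_independent_subset by blast
  then obtain S0 where S0: "S0 \<subseteq> S" "inj_on phi S0" "V = phi ` S0"
    by (meson subset_image_inj)
  then have "indep S0"
    using represents_indep_iff[OF R] S V(2) by auto
  with S0 V(3) show ?thesis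
    using that by blast
qed

lemma represents_basis_spans:
  fixes phi :: "'a \<Rightarrow> 'f::field ^ 'n"
  assumes R: "represents E indep phi" and B: "basis E indep B" and x: "x \<in> E"
  shows "phi x \<in> vec.span (phi ` B)"
proof (rule ccontr)
  assume x_out: "phi x \<notin> vec.span (phi ` B)"
  then have x_new: "phi x \<notin> phi ` B"
    using vec.span_base by blast
  have BE: "B \<subseteq> E" and "indep B"
    using B unfolding basis_def by auto
  then have "inj_on phi B" "vec.independent (phi ` B)"
    using represents_indep_iff[OF R BE] by auto
  with x_out x_new have "inj_on phi (insert x B)" "vec.independent (phi ` insert x B)"
    by (auto simp: vec.independent_insert)
  then have "indep (insert x B)"
    using represents_indep_iff[OF R] x BE by simp
  moreover have "x \<notin> B"
    using x_new by blast
  ultimately show False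
    using B x unfolding basis_def by blast
qed

lemma loose_mrank_le_card_spanning:
  fixes phi :: "'a \<Rightarrow> 'f::field ^ 'n"
  assumes M: "matroid E indep" and R: "represents E indep phi" and L: "loose E indep e"
    and S: "S \<subseteq> E" "e \<notin> S" "phi e \<in> vec.span (phi ` S)"
  shows "mrank E indep \<le> card S + 1"
proof -
  obtain S0 where S0: "S0 \<subseteq> S" "indep S0" "phi ` S \<subseteq> vec.span (phi ` S0)"
    using represents_spanning_indep_subset[OF R S(1)] .
  have finS: "finite S"
    using matroid_finite_subset[OF M S(1)] .
  have eE: "e \<in> E" and e_notin: "e \<notin> S0"
    using L S0(1) S(2) unfolding loose_def by auto
  have "phi e \<in> vec.span (phi ` S0)"
    using S(3) vec.span_minimal[OF S0(3) vec.subspace_span] by blast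
  have "\<not> indep (insert e S0)"
  proof
    assume "indep (insert e S0)"
    then have "inj_on phi (insert e S0)" "vec.independent (phi ` insert e S0)"
      using represents_indep_iff[OF R] eE S0(1) S(1) by auto
    with e_notin have "phi e \<notin> vec.span (phi ` S0)"
      by (simp add: vec.independent_insert)
    with \<open>phi e \<in> vec.span (phi ` S0)\<close> show False
      by contradiction
  qed
  then have "mrank E indep \<le> card (insert e S0)"
    using loose_mrank_le_card_dependent[OF M L] eE e_notin S0 S(1) by auto
  also have "\<dots> \<le> card S + 1"
    using e_notin finite_subset[OF S0(1) finS] card_mono[OF finS S0(1)] by simp
  finally show ?thesis .
qed

lemma span_image_coordinates:
  fixes w :: "'a \<Rightarrow> 'f::field ^ 'n"
  assumes "finite B" "inj_on w B" "y \<in> vec.span (w ` B)"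
  obtains a where "y = (\<Sum>b\<in>B. a b *s w b)"
proof -
  have "y \<in> range (\<lambda>u. \<Sum>v\<in>w ` B. u v *s v)"
    using assms(1,3) vec.span_finite[of "w ` B"] by simp
  then obtain u where "y = (\<Sum>v\<in>w ` B. u v *s v)"
    by blast
  then have "y = (\<Sum>b\<in>B. u (w b) *s w b)"
    by (simp add: sum.reindex[OF assms(2)])
  then show ?thesis
    by (rule that)
qed

lemma loose_mrank_le_card_support:
  fixes phi :: "'a \<Rightarrow> 'f::field ^ 'n"
  assumes M: "matroid E indep" and R: "represents E indep phi" and B: "basis E indep B"
    and L: "loose E indep x" "x \<notin> B" and x: "phi x = (\<Sum>b\<in>B. a b *s phi b)"
  shows "mrank E indep \<le> card {b\<in>B. a b \<noteq> 0} + 1"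
proof (rule loose_mrank_le_card_spanning[OF M R L(1)])
  have "finite B"
    using B matroid_finite_subset[OF M] unfolding basis_def by blast
  then have "phi x = (\<Sum>b\<in>{b\<in>B. a b \<noteq> 0}. a b *s phi b)"
    unfolding x by (intro sum.mono_neutral_right) auto
  also have "\<dots> \<in> vec.span (phi ` {b\<in>B. a b \<noteq> 0})"
    by (intro vec.span_sum vec.span_scale vec.span_base) auto
  finally show "phi x \<in> vec.span (phi ` {b\<in>B. a b \<noteq> 0})" .
qed (use B L(2) in \<open>auto simp: basis_def\<close>)

lemma in_span_eliminate_common_ratio:
  fixes w :: "'a \<Rightarrow> 'f::field ^ 'n"
  assumes "finite B" "u = (\<Sum>b\<in>B. a b *s w b)" "v = (\<Sum>b\<in>B. c b *s w b)"
    and "\<And>b. b \<in> T \<Longrightarrow> a b = l * c b"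
  shows "u \<in> vec.span (insert v (w ` (B - T)))"
proof -
  have "u - l *s v = (\<Sum>b\<in>B. (a b - l * c b) *s w b)"
    using assms(2,3)
    by (simp add: vec.scale_sum_right vec.scale_left_diff_distrib sum_subtractf)
  also have "\<dots> = (\<Sum>b\<in>B - T. (a b - l * c b) *s w b)"
    using assms(1,4) by (intro sum.mono_neutral_right) auto
  also have "\<dots> \<in> vec.span (w ` (B - T))"
    by (intro vec.span_sum vec.span_scale vec.span_base) auto
  finally have "u - l *s v \<in> vec.span (insert v (w ` (B - T)))"
    using vec.span_mono[of "w ` (B - T)"] by blast
  moreover have "l *s v \<in> vec.span (insert v (w ` (B - T)))"
    by (intro vec.span_scale vec.span_base) simp
  ultimately have "(u - l *s v) + l *s v \<in> vec.span (insert v (w ` (B - T)))"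
    by (rule vec.span_add)
  then show ?thesis
    by simp
qed

lemma pigeonhole_nonzero_values:
  fixes g :: "'a \<Rightarrow> 'f::zero"
  assumes "finite (UNIV :: 'f set)" "finite P" "\<And>b. b \<in> P \<Longrightarrow> g b \<noteq> 0"
    and "m * (CARD('f) - 1) < card P"
  shows "\<exists>l. m < card {b\<in>P. g b = l}"
proof -
  let ?K = "UNIV - {0 :: 'f}"
  have "P \<noteq> {}"
    using assms(4) by auto
  then have "?K \<noteq> {}"
    using assms(3) by blast
  then obtain l where l: "card (g -` {l} \<inter> P) * card ?K \<ge> card P"
    using pigeonhole_card[of g P ?K] assms(1-3) by auto
  have K: "card ?K = CARD('f) - 1"
    using assms(1) by (simp add: card_Diff_singleton)
  have "m * card ?K < card (g -` {l} \<inter> P) * card ?K"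
    using l assms(4) unfolding K by linarith
  then have "m < card (g -` {l} \<inter> P)"
    by (simp only: mult_less_cancel2)
  moreover have "g -` {l} \<inter> P = {b\<in>P. g b = l}"
    by blast
  ultimately show ?thesis
    by auto
qed

lemma loose_pair_common_support:
  fixes phi :: "'a \<Rightarrow> 'f::field ^ 'n"
  assumes M: "matroid E indep" and R: "represents E indep phi" and B: "basis E indep B"
    and Le: "loose E indep e" "e \<notin> B" and a: "phi e = (\<Sum>b\<in>B. a b *s phi b)"
    and Lf: "loose E indep f" "f \<notin> B" and c: "phi f = (\<Sum>b\<in>B. c b *s phi b)"
  shows "mrank E indep \<le> card {b\<in>B. a b \<noteq> 0 \<and> c b \<noteq> 0} + 2"
proof -
  define A where "A = {b\<in>B. a b \<noteq> 0}"
  define C where "C = {b\<in>B. c b \<noteq> 0}"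
  have finB: "finite B"
    using B matroid_finite_subset[OF M] unfolding basis_def by blast
  then have finA: "finite A" and finC: "finite C"
    unfolding A_def C_def by auto
  have "mrank E indep \<le> card A + 1"
    unfolding A_def by (rule loose_mrank_le_card_support[OF M R B Le a])
  moreover have "mrank E indep \<le> card C + 1"
    unfolding C_def by (rule loose_mrank_le_card_support[OF M R B Lf c])
  moreover have "card (A \<union> C) \<le> card B"
    using finB unfolding A_def C_def by (intro card_mono) auto
  ultimately have "mrank E indep \<le> card (A \<inter> C) + 2"
    using card_Un_Int[OF finA finC] basis_card_eq_mrank[OF M B] by linarith
  moreover have "A \<inter> C = {b\<in>B. a b \<noteq> 0 \<and> c b \<noteq> 0}"
    unfolding A_def C_def by blast
  ultimately show ?thesis
    by simp
qed

lemma basis_meets_loose_pair: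
  fixes phi :: "'a \<Rightarrow> 'f::field ^ 'n"
  assumes F: "finite (UNIV :: 'f set)"
    and M: "matroid E indep" and R: "represents E indep phi"
    and Le: "loose E indep e" and Lf: "loose E indep f" and ef: "e \<noteq> f"
    and r: "2 * CARD('f) < mrank E indep" and B: "basis E indep B"
  shows "e \<in> B \<or> f \<in> B"
proof (rule ccontr)
  assume "\<not> (e \<in> B \<or> f \<in> B)"
  then have eB: "e \<notin> B" and fB: "f \<notin> B"
    by auto
  have eE: "e \<in> E" and fE: "f \<in> E"
    using Le Lf unfolding loose_def by auto
  have BE: "B \<subseteq> E" and "indep B"
    using B unfolding basis_def by auto
  have finB: "finite B"
    using matroid_finite_subset[OF M BE] .
  have injB: "inj_on phi B"
    using represents_indep_iff[OF R BE] \<open>indep B\<close> by blast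
  obtain a where a: "phi e = (\<Sum>b\<in>B. a b *s phi b)"
    using span_image_coordinates[OF finB injB represents_basis_spans[OF R B eE]] .
  obtain c where c: "phi f = (\<Sum>b\<in>B. c b *s phi b)"
    using span_image_coordinates[OF finB injB represents_basis_spans[OF R B fE]] .
  define P where "P = {b\<in>B. a b \<noteq> 0 \<and> c b \<noteq> 0}"
  have finP: "finite P"
    using finB unfolding P_def by auto
  have "2 * (CARD('f) - 1) < card P"
    using loose_pair_common_support[OF M R B Le eB a Lf fB c] r finite_UNIV_card_ge_0[OF F]
    unfolding P_def by linarith
  moreover have ratio_nonzero: "a b / c b \<noteq> 0" if "b \<in> P" for b
    using that unfolding P_def by simp
  ultimately obtain l where "2 < card {b\<in>P. a b / c b = l}"
    using pigeonhole_nonzero_values[where g = "\<lambda>b. a b / c b", OF F finP] by blast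
  moreover define T where "T = {b\<in>P. a b / c b = l}"
  ultimately have T: "3 \<le> card T" "T \<subseteq> B"
    unfolding P_def by auto
  have finT: "finite T"
    using finite_subset[OF T(2) finB] .
  have "a b = l * c b" if "b \<in> T" for b
    using that unfolding T_def P_def by (auto simp: divide_eq_eq)
  then have "phi e \<in> vec.span (insert (phi f) (phi ` (B - T)))"
    by (rule in_span_eliminate_common_ratio[OF finB a c])
  then have "phi e \<in> vec.span (phi ` insert f (B - T))"
    by simp
  moreover have "insert f (B - T) \<subseteq> E" "e \<notin> insert f (B - T)"
    using BE fE eB ef by auto
  ultimately have "mrank E indep \<le> card (insert f (B - T)) + 1"
    using loose_mrank_le_card_spanning[OF M R Le] by blast
  also have "\<dots> \<le> card B - card T + 2"
    using finB T(2) finT by (simp add: card_insert_if card_Diff_subset)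
  finally show False
    using basis_card_eq_mrank[OF M B] T(1) card_mono[OF finB T(2)] by linarith
qed

theorem theorem4p1:
  fixes E :: "'a set" and indep :: "'a set \<Rightarrow> bool"
    and phi :: "'a \<Rightarrow> 'f::field ^ 'n" and q :: nat and e f :: 'a
  assumes "\<exists>p k. prime p \<and> k > 0 \<and> q = p ^ k"
    and "finite (UNIV :: 'f set)" and "CARD('f) = q"
    and "matroid E indep"
    and "represents E indep phi"
    and "simple_matroid E indep"
    and "\<forall>x \<in> E. \<not> coloop E indep x"
    and "loose E indep e" and "loose E indep f" and "e \<noteq> f"
  shows "mrank E indep \<le> 2 * q \<or> cocircuit E indep {e, f}"
proof (cases "mrank E indep \<le> 2 * q")
  case False
  then have "2 * CARD('f) < mrank E indep"
    using assms(3) by simp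
  then have "e \<in> B \<or> f \<in> B" if "basis E indep B" for B
    using basis_meets_loose_pair[OF assms(2,4,5,8,9,10)] that by blast
  moreover have "e \<in> E" "f \<in> E"
    using assms(8,9) unfolding loose_def by auto
  ultimately have "cocircuit E indep {e, f}"
    using assms(7) by (intro cocircuit_pair_if_meets_every_basis) auto
  then show ?thesis
    by simp
qed simp

end
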